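(* Let $(V_n)_{n\geq 1}$ be an eventually polynomial sequence of representations, $V_n$ a representation of $S_n$. Then there exists $N$ such that the sign representation does not occur in $V_n$ for all $n\geq N$. In particular, for every partition $\lambda$, the sign representation of $S_n$ does not occur in the restriction of $W_\lambda(\mathbb C^n)$ to $S_n$ for any $n>|\lambda|+1$.
   Context: For $i\geq1$, $X_i(\sigma)$ denotes the number of $i$-cycles of a permutation $\sigma$. A sequence $(V_n)$ with $V_n$ a representation of $S_n$ is eventually polynomial if there exist $p\in\mathbb C[X_1,X_2,\dotsc]$ and $N\geq0$ such that $p(X_1(\sigma),X_2(\sigma),\dotsc)$ equals the character of $V_n$ at $\sigma$ for all $n\geq N$ and $\sigma\in S_n$. $W_\lambda(\mathbb C^n)$ is the irreducible polynomial representation (Weyl module) of $GL_n(\mathbb C)$ indexed by $\lambda$ (zero if $\lambda$ has more than $n$ parts), and $S_n$ is embedded in $GL_n(\mathbb C)$ as permutation matrices. *)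

theory Defs
  imports "HOL-Combinatorics.Permutations" "HOL-Combinatorics.Orbits" "Jordan_Normal_Form.Matrix"
begin

text \<open>S_n is the group of permutations of {0..<n}. X_i(sigma) = number of i-cycles
  (cycles = orbits, fixed points are 1-cycles).\<close>
definition cyc_count :: "nat \<Rightarrow> (nat \<Rightarrow> nat) \<Rightarrow> nat \<Rightarrow> nat" where
  "cyc_count n \<sigma> i = card {orbit \<sigma> x | x. x < n \<and> card (orbit \<sigma> x) = i}"

text \<open>A polynomial in C[X_1,X_2,...] is a finite list of terms (c, e) standing for
  c * X_1^(e!0) * X_2^(e!1) * ... ; evaluation at the values X i (i >= 1).\<close>
type_synonym cpoly = "(complex \<times> nat list) list"

definition cpoly_eval :: "cpoly \<Rightarrow> (nat \<Rightarrow> nat) \<Rightarrow> complex" where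
  "cpoly_eval p X = (\<Sum>(c, e)\<leftarrow>p. c * (\<Prod>i<length e. of_nat (X (Suc i)) ^ (e ! i)))"

definition is_rep :: "nat \<Rightarrow> nat \<Rightarrow> ((nat \<Rightarrow> nat) \<Rightarrow> complex mat) \<Rightarrow> bool" where
  "is_rep n d \<rho> \<longleftrightarrow>
     (\<forall>\<sigma>. \<sigma> permutes {..<n} \<longrightarrow> \<rho> \<sigma> \<in> carrier_mat d d) \<and>
     \<rho> id = 1\<^sub>m d \<and>
     (\<forall>\<sigma> \<tau>. \<sigma> permutes {..<n} \<longrightarrow> \<tau> permutes {..<n} \<longrightarrow> \<rho> (\<sigma> \<circ> \<tau>) = \<rho> \<sigma> * \<rho> \<tau>)"

definition sign_occurs :: "nat \<Rightarrow> nat \<Rightarrow> ((nat \<Rightarrow> nat) \<Rightarrow> complex mat) \<Rightarrow> bool" where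
  "sign_occurs n d \<rho> \<longleftrightarrow>
     (\<exists>v \<in> carrier_vec d. v \<noteq> 0\<^sub>v d \<and>
        (\<forall>\<sigma>. \<sigma> permutes {..<n} \<longrightarrow> \<rho> \<sigma> *\<^sub>v v = of_int (sign \<sigma>) \<cdot>\<^sub>v v))"

definition mat_trace :: "complex mat \<Rightarrow> complex" where
  "mat_trace A = (\<Sum>i<dim_row A. A $$ (i, i))"

definition eventually_polynomial :: "(nat \<Rightarrow> nat) \<Rightarrow> (nat \<Rightarrow> (nat \<Rightarrow> nat) \<Rightarrow> complex mat) \<Rightarrow> bool" where
  "eventually_polynomial d \<rho> \<longleftrightarrow>
     (\<exists>p N. \<forall>n\<ge>N. \<forall>\<sigma>. \<sigma> permutes {..<n} \<longrightarrow>
        mat_trace (\<rho> n \<sigma>) = cpoly_eval p (cyc_count n \<sigma>))"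

definition is_partition :: "nat list \<Rightarrow> bool" where
  "is_partition lam \<longleftrightarrow> sorted_wrt (\<ge>) lam \<and> (\<forall>x\<in>set lam. 0 < x)"

text \<open>Canonical Young tableau of shape lam: positions 0..<|lam| filled row by row.\<close>
definition row_of :: "nat list \<Rightarrow> nat \<Rightarrow> nat" where
  "row_of lam p = (LEAST r. p < sum_list (take (Suc r) lam))"

definition col_of :: "nat list \<Rightarrow> nat \<Rightarrow> nat" where
  "col_of lam p = p - sum_list (take (row_of lam p) lam)"

definition row_group :: "nat list \<Rightarrow> (nat \<Rightarrow> nat) set" where
  "row_group lam = {\<pi>. \<pi> permutes {..<sum_list lam} \<and>
      (\<forall>p<sum_list lam. row_of lam (\<pi> p) = row_of lam p)}"

definition col_group :: "nat list \<Rightarrow> (nat \<Rightarrow> nat) set" where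
  "col_group lam = {\<pi>. \<pi> permutes {..<sum_list lam} \<and>
      (\<forall>p<sum_list lam. col_of lam (\<pi> p) = col_of lam p)}"

text \<open>Tensors in (C^n)^{\<otimes>k}: coefficient functions on words w of length k over {0..<n}
  (w = (i_0,...,i_{k-1}) stands for e_{i_0} \<otimes> ... \<otimes> e_{i_{k-1}}).\<close>
definition tensor_space :: "nat \<Rightarrow> nat \<Rightarrow> (nat list \<Rightarrow> complex) set" where
  "tensor_space n k = {T. \<forall>w. T w \<noteq> 0 \<longrightarrow> length w = k \<and> set w \<subseteq> {..<n}}"

definition pos_act :: "(nat \<Rightarrow> nat) \<Rightarrow> (nat list \<Rightarrow> complex) \<Rightarrow> (nat list \<Rightarrow> complex)" where
  "pos_act \<pi> T = (\<lambda>w. T (map (\<lambda>j. w ! \<pi> j) [0..<length w]))"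

definition young_sym :: "nat list \<Rightarrow> (nat list \<Rightarrow> complex) \<Rightarrow> (nat list \<Rightarrow> complex)" where
  "young_sym lam T = (\<lambda>w. \<Sum>q\<in>col_group lam. \<Sum>p\<in>row_group lam.
        of_int (sign q) * pos_act (q \<circ> p) T w)"

text \<open>W_lam(C^n) = c_lam (C^n)^{\<otimes>|lam|} (zero if lam has more than n parts).\<close>
definition weyl_module :: "nat list \<Rightarrow> nat \<Rightarrow> (nat list \<Rightarrow> complex) set" where
  "weyl_module lam n = young_sym lam ` tensor_space n (sum_list lam)"

text \<open>Action of sigma in S_n, viewed as the permutation matrix e_i \<mapsto> e_(sigma i) in GL_n,
  on tensors: sigma (e_w) = e_(sigma \<circ> w).\<close>
definition letter_act :: "(nat \<Rightarrow> nat) \<Rightarrow> (nat list \<Rightarrow> complex) \<Rightarrow> (nat list \<Rightarrow> complex)" where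
  "letter_act \<sigma> T = (\<lambda>ws. T (map (inv_into UNIV \<sigma>) ws))"

definition sign_occurs_in_weyl :: "nat list \<Rightarrow> nat \<Rightarrow> bool" where
  "sign_occurs_in_weyl lam n \<longleftrightarrow>
     (\<exists>v \<in> weyl_module lam n. v \<noteq> (\<lambda>_. 0) \<and>
        (\<forall>\<sigma>. \<sigma> permutes {..<n} \<longrightarrow> letter_act \<sigma> v = (\<lambda>w. of_int (sign \<sigma>) * v w)))"

end

theory Submission
  imports Defs "Jordan_Normal_Form.Schur_Decomposition"
begin

(* If the sign representation occurs in V_n, the antisymmetrizer A = sum_sigma sign(sigma) rho(sigma)
   satisfies A * A = n! A and has the eigenvalue n!. All its eigenvalues therefore lie in {0, n!},
   so its trace is a positive multiple of n!. On the other hand tr A = sum_sigma sign(sigma) p(X(sigma)),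
   and this alternating sum vanishes once n >= weight(p) + 2: as i X_i(sigma) counts the points lying in
   i-cycles, a monomial of weight w expands into a sum over w-tuples of points with prescribed orbit sizes,
   and composing with the transposition of two points outside the prescribed orbits is a sign-reversing
   involution on the permutations meeting the prescription.
   For W_lambda(C^n) with n > |lambda| + 1, every word indexing a tensor coordinate misses two letters;
   their transposition fixes the coordinate but acts by -1 on a sign vector. *)

section \<open>Orbits and cycle counts\<close>

lemma permutes_self_in_orbit:
  assumes "\<sigma> permutes S" "finite S"
  shows "x \<in> orbit \<sigma> x"
  using permutation_self_in_orbit[OF permutes_imp_permutation[OF assms(2,1)]] .

lemma permutes_orbit_eq:
  assumes "\<sigma> permutes S" "finite S" "y \<in> orbit \<sigma> x"
  shows "orbit \<sigma> y = orbit \<sigma> x"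
  using orbit_cyclic_eq3[OF cyclic_on_orbit[OF assms(1,2)] assms(3)] .

definition points_in_cycles :: "nat \<Rightarrow> (nat \<Rightarrow> nat) \<Rightarrow> nat \<Rightarrow> nat" where
  "points_in_cycles n \<sigma> l = card {x. x < n \<and> card (orbit \<sigma> x) = l}"

lemma points_in_cycles_eq_mult_cyc_count:
  assumes \<sigma>: "\<sigma> permutes {..<n}"
  shows "points_in_cycles n \<sigma> l = l * cyc_count n \<sigma> l"
proof -
  let ?O = "{orbit \<sigma> x | x. x < n \<and> card (orbit \<sigma> x) = l}"
  have self: "x \<in> orbit \<sigma> x" for x
    using permutes_self_in_orbit[OF \<sigma> finite_lessThan] .
  have same_orbit: "orbit \<sigma> y = orbit \<sigma> x" if "y \<in> orbit \<sigma> x" for x y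
    using permutes_orbit_eq[OF \<sigma> finite_lessThan that] .
  have "\<Union>?O = {x. x < n \<and> card (orbit \<sigma> x) = l}"
    using permutes_orbit_subset[OF \<sigma>] self same_orbit
    by fastforce
  moreover have "l * card ?O = card (\<Union>?O)"
  proof (rule card_partition)
    show "finite ?O"
      by simp
    show "finite (\<Union>?O)"
      using finite_orbit[OF self] by auto
    show "card c = l" if "c \<in> ?O" for c
      using that by blast
    show "c1 \<inter> c2 = {}" if "c1 \<in> ?O" "c2 \<in> ?O" "c1 \<noteq> c2" for c1 c2
      using that same_orbit by blast
  qed
  ultimately show ?thesis
    unfolding points_in_cycles_def cyc_count_def by simp
qed

definition has_orbit_cards :: "(nat \<times> nat) list \<Rightarrow> (nat \<Rightarrow> nat) \<Rightarrow> bool" where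
  "has_orbit_cards C \<sigma> \<longleftrightarrow> (\<forall>(x, l)\<in>set C. card (orbit \<sigma> x) = l)"

definition prescribed_orbits :: "(nat \<times> nat) list \<Rightarrow> (nat \<Rightarrow> nat) \<Rightarrow> nat set" where
  "prescribed_orbits C \<sigma> = (\<Union>(x, l)\<in>set C. orbit \<sigma> x)"

lemma card_prescribed_orbits_le:
  assumes \<sigma>: "\<sigma> permutes {..<n}" and "has_orbit_cards C \<sigma>"
  shows "finite (prescribed_orbits C \<sigma>) \<and> card (prescribed_orbits C \<sigma>) \<le> sum_list (map snd C)"
  using assms(2)
proof (induction C)
  case Nil
  then show ?case
    by (simp add: prescribed_orbits_def)
next
  case (Cons c C)
  obtain x l where c: "c = (x, l)"
    by fastforce
  have "finite (orbit \<sigma> x)"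
    using finite_orbit[OF permutes_self_in_orbit[OF \<sigma> finite_lessThan]] .
  moreover have "card (orbit \<sigma> x) = l" "has_orbit_cards C \<sigma>"
    using Cons.prems by (simp_all add: has_orbit_cards_def c)
  moreover have "prescribed_orbits (c # C) \<sigma> = orbit \<sigma> x \<union> prescribed_orbits C \<sigma>"
    by (simp add: prescribed_orbits_def c)
  ultimately show ?case
    using Cons.IH card_Un_le[of "orbit \<sigma> x" "prescribed_orbits C \<sigma>"] by (simp add: c)
qed

lemma orbit_comp_transpose_eq:
  assumes "\<sigma> permutes S" "finite S" "a \<notin> orbit \<sigma> x" "b \<notin> orbit \<sigma> x"
  shows "orbit (\<sigma> \<circ> transpose a b) x = orbit \<sigma> x"
proof (rule orbit_cong)
  show "x \<in> orbit \<sigma> x"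
    using permutes_self_in_orbit[OF assms(1,2)] .
  show "(\<sigma> \<circ> transpose a b) y = \<sigma> y" if "y \<in> orbit \<sigma> x" for y
    using that assms(3,4) by (metis comp_apply transpose_apply_other)
qed

lemma prescribed_orbits_comp_transpose:
  assumes "\<sigma> permutes {..<n}" "a \<notin> prescribed_orbits C \<sigma>" "b \<notin> prescribed_orbits C \<sigma>"
  shows "prescribed_orbits C (\<sigma> \<circ> transpose a b) = prescribed_orbits C \<sigma>"
    and "has_orbit_cards C (\<sigma> \<circ> transpose a b) \<longleftrightarrow> has_orbit_cards C \<sigma>"
proof -
  have "orbit (\<sigma> \<circ> transpose a b) x = orbit \<sigma> x" if "(x, l) \<in> set C" for x l
    using assms that by (intro orbit_comp_transpose_eq[OF assms(1) finite_lessThan])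
      (auto simp: prescribed_orbits_def)
  then show "prescribed_orbits C (\<sigma> \<circ> transpose a b) = prescribed_orbits C \<sigma>"
    and "has_orbit_cards C (\<sigma> \<circ> transpose a b) \<longleftrightarrow> has_orbit_cards C \<sigma>"
    by (auto simp: prescribed_orbits_def has_orbit_cards_def)
qed

section \<open>Alternating sums over the symmetric group\<close>

lemma obtain_two_outside:
  assumes "finite A" "finite B" "card B + 2 \<le> card A"
  obtains a b where "a \<in> A - B" "b \<in> A - B" "a \<noteq> b"
proof -
  have "card A - card B \<le> card (A - B)"
    using diff_card_le_card_Diff[OF assms(2)] .
  then have "\<not> card (A - B) \<le> Suc 0"
    using assms(3) by linarith
  then show thesis
    using that card_le_Suc0_iff_eq[of "A - B"] assms(1) by blast
qed

lemma sum_eq_0_if_sign_reversing_involution: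
  fixes f :: "'b \<Rightarrow> 'a::{idom, ring_char_0}"
  assumes "\<And>x. x \<in> S \<Longrightarrow> g x \<in> S" "\<And>x. x \<in> S \<Longrightarrow> g (g x) = x"
    and "\<And>x. x \<in> S \<Longrightarrow> f (g x) = - f x"
  shows "sum f S = 0"
proof -
  have "sum f S = sum (\<lambda>x. f (g x)) S"
    by (rule sum.reindex_bij_witness[where i = g and j = g]) (use assms in auto)
  also have "\<dots> = - sum f S"
    by (simp add: assms(3) sum_negf)
  finally show ?thesis
    by simp
qed

lemma sum_sign_eq_0_if_transpositions_act:
  assumes perm: "\<And>\<sigma>. \<sigma> \<in> S \<Longrightarrow> permutation \<sigma>"
    and two: "\<And>\<sigma>. \<sigma> \<in> S \<Longrightarrow> \<exists>a b. a \<in> F \<sigma> \<and> b \<in> F \<sigma> \<and> a \<noteq> b"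
    and closed: "\<And>\<sigma> a b. \<sigma> \<in> S \<Longrightarrow> a \<in> F \<sigma> \<Longrightarrow> b \<in> F \<sigma> \<Longrightarrow>
      \<sigma> \<circ> transpose a b \<in> S \<and> F (\<sigma> \<circ> transpose a b) = F \<sigma>"
  shows "(\<Sum>\<sigma>\<in>S. of_int (sign \<sigma>) :: 'b::{idom, ring_char_0}) = 0"
proof -
  define swap where "swap \<sigma> = (SOME (a, b). a \<in> F \<sigma> \<and> b \<in> F \<sigma> \<and> a \<noteq> b)" for \<sigma>
  define g where "g \<sigma> = \<sigma> \<circ> transpose (fst (swap \<sigma>)) (snd (swap \<sigma>))" for \<sigma>
  \<comment> \<open>The chosen pair depends on \<open>\<sigma>\<close> only through \<open>F \<sigma>\<close>, which \<open>g\<close> leaves unchanged;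
    this is what makes \<open>g\<close> an involution.\<close>
  have "g \<sigma> \<in> S \<and> g (g \<sigma>) = \<sigma> \<and> of_int (sign (g \<sigma>)) = - (of_int (sign \<sigma>) :: 'b)"
    if \<sigma>: "\<sigma> \<in> S" for \<sigma>
  proof -
    obtain a b where ab: "swap \<sigma> = (a, b)"
      by fastforce
    have "\<exists>p. case p of (a, b) \<Rightarrow> a \<in> F \<sigma> \<and> b \<in> F \<sigma> \<and> a \<noteq> b"
      using two[OF \<sigma>] by auto
    then have F: "a \<in> F \<sigma>" "b \<in> F \<sigma>" "a \<noteq> b"
      using someI_ex ab unfolding swap_def by (metis (mono_tags, lifting) case_prodD)+
    have g_\<sigma>: "g \<sigma> = \<sigma> \<circ> transpose a b"
      by (simp add: g_def ab)
    have "g \<sigma> \<in> S" "F (g \<sigma>) = F \<sigma>"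
      using closed[OF \<sigma> F(1,2)] by (simp_all add: g_\<sigma>)
    moreover from this(2) have "swap (g \<sigma>) = swap \<sigma>"
      by (simp add: swap_def)
    moreover have "sign (g \<sigma>) = - sign \<sigma>"
      using F(3) perm[OF \<sigma>] by (simp add: g_\<sigma> sign_compose permutation_swap_id sign_swap_id)
    ultimately show ?thesis
      by (simp add: g_def ab comp_assoc)
  qed
  then show ?thesis
    by (intro sum_eq_0_if_sign_reversing_involution[where g = g]) auto
qed

lemma sum_sign_has_orbit_cards_eq_0:
  assumes n: "sum_list (map snd C) + 2 \<le> n"
  shows "(\<Sum>\<sigma> | \<sigma> permutes {..<n}. of_int (sign \<sigma>) * of_bool (has_orbit_cards C \<sigma>)) = (0::complex)"
proof -
  let ?S = "{\<sigma>. \<sigma> permutes {..<n} \<and> has_orbit_cards C \<sigma>}"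
  let ?free = "\<lambda>\<sigma>. {..<n} - prescribed_orbits C \<sigma>"
  have "(\<Sum>\<sigma>\<in>?S. of_int (sign \<sigma>) :: complex) = 0"
  proof (rule sum_sign_eq_0_if_transpositions_act[where F = ?free])
    fix \<sigma> assume \<sigma>: "\<sigma> \<in> ?S"
    then show "permutation \<sigma>"
      using permutes_imp_permutation[OF finite_lessThan] by blast
    have "finite (prescribed_orbits C \<sigma>)" "card (prescribed_orbits C \<sigma>) + 2 \<le> card {..<n}"
      using card_prescribed_orbits_le[of \<sigma> n C] \<sigma> n by auto
    then show "\<exists>a b. a \<in> ?free \<sigma> \<and> b \<in> ?free \<sigma> \<and> a \<noteq> b"
      by (metis obtain_two_outside[OF finite_lessThan])
    fix a b assume "a \<in> ?free \<sigma>" "b \<in> ?free \<sigma>"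
    moreover from this have "transpose a b permutes {..<n}"
      by (intro permutes_swap_id) auto
    ultimately show "\<sigma> \<circ> transpose a b \<in> ?S \<and> ?free (\<sigma> \<circ> transpose a b) = ?free \<sigma>"
      using \<sigma> prescribed_orbits_comp_transpose[of \<sigma> n a C b] by (auto intro: permutes_compose)
  qed
  moreover have "finite {\<sigma>. \<sigma> permutes {..<n}}"
    using finite_permutations[OF finite_lessThan] .
  ultimately show ?thesis
    by (simp add: Collect_conj_eq Int_commute)
qed

lemma sum_sign_prod_points_in_cycles_eq_0:
  assumes "sum_list (map snd C) + sum_list ls + 2 \<le> n"
  shows "(\<Sum>\<sigma> | \<sigma> permutes {..<n}. of_int (sign \<sigma>) * of_bool (has_orbit_cards C \<sigma>) *
            (\<Prod>l\<leftarrow>ls. of_nat (points_in_cycles n \<sigma> l))) = (0::complex)"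
  using assms
proof (induction ls arbitrary: C)
  case Nil
  then show ?case
    using sum_sign_has_orbit_cards_eq_0 by simp
next
  case (Cons l ls)
  let ?rest = "\<lambda>\<sigma>. \<Prod>l\<leftarrow>ls. of_nat (points_in_cycles n \<sigma> l) :: complex"
  have split: "of_bool (has_orbit_cards C \<sigma>) * of_nat (points_in_cycles n \<sigma> l) =
      (\<Sum>x<n. of_bool (has_orbit_cards ((x, l) # C) \<sigma>) :: complex)" for \<sigma>
  proof -
    have "of_nat (points_in_cycles n \<sigma> l) = (\<Sum>x<n. of_bool (card (orbit \<sigma> x) = l) :: complex)"
      by (simp add: points_in_cycles_def Collect_conj_eq lessThan_def)
    then show ?thesis
      by (simp only: sum_distrib_left) (intro sum.cong refl, auto simp: has_orbit_cards_def)
  qed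
  have "of_int (sign \<sigma>) * of_bool (has_orbit_cards C \<sigma>) * (of_nat (points_in_cycles n \<sigma> l) * ?rest \<sigma>) =
      (\<Sum>x<n. of_int (sign \<sigma>) * of_bool (has_orbit_cards ((x, l) # C) \<sigma>) * ?rest \<sigma>)" for \<sigma>
    unfolding sum_distrib_right[symmetric] sum_distrib_left[symmetric] split[symmetric]
    by (simp only: mult.assoc)
  then have "(\<Sum>\<sigma> | \<sigma> permutes {..<n}. of_int (sign \<sigma>) * of_bool (has_orbit_cards C \<sigma>) *
          (of_nat (points_in_cycles n \<sigma> l) * ?rest \<sigma>)) =
        (\<Sum>\<sigma> | \<sigma> permutes {..<n}. \<Sum>x<n.
          of_int (sign \<sigma>) * of_bool (has_orbit_cards ((x, l) # C) \<sigma>) * ?rest \<sigma>)"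
    by simp
  also have "\<dots> = (\<Sum>x<n. \<Sum>\<sigma> | \<sigma> permutes {..<n}.
          of_int (sign \<sigma>) * of_bool (has_orbit_cards ((x, l) # C) \<sigma>) * ?rest \<sigma>)"
    by (rule sum.swap)
  also have "\<dots> = 0"
    using Cons.IH[of "(_, l) # C"] Cons.prems by simp
  finally show ?case
    by simp
qed

definition monomial_eval :: "nat list \<Rightarrow> (nat \<Rightarrow> nat) \<Rightarrow> complex" where
  "monomial_eval e X = (\<Prod>i<length e. of_nat (X (Suc i)) ^ (e ! i))"

lemma cpoly_eval_Cons: "cpoly_eval ((c, e) # p) X = c * monomial_eval e X + cpoly_eval p X"
  by (simp add: cpoly_eval_def monomial_eval_def)

definition cycle_lengths :: "nat list \<Rightarrow> nat list" where
  "cycle_lengths e = concat (map (\<lambda>i. replicate (e ! i) (Suc i)) [0..<length e])"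

lemma prod_list_concat: "prod_list (concat xss) = prod_list (map prod_list xss)"
  by (induction xss) auto

lemma prod_points_in_cycles_cycle_lengths:
  assumes \<sigma>: "\<sigma> permutes {..<n}"
  shows "(\<Prod>l\<leftarrow>cycle_lengths e. of_nat (points_in_cycles n \<sigma> l)) =
         (\<Prod>i<length e. of_nat (Suc i) ^ (e ! i)) * monomial_eval e (cyc_count n \<sigma>)"
proof -
  have "(\<Prod>l\<leftarrow>cycle_lengths e. of_nat (points_in_cycles n \<sigma> l)) =
        (\<Prod>i<length e. of_nat (points_in_cycles n \<sigma> (Suc i)) ^ (e ! i) :: complex)"
    unfolding cycle_lengths_def map_concat prod_list_concat
    by (simp add: o_def prod.distinct_set_conv_list[symmetric] atLeast0LessThan)
  also have "\<dots> = (\<Prod>i<length e. of_nat (Suc i) ^ (e ! i) * of_nat (cyc_count n \<sigma> (Suc i)) ^ (e ! i))"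
    by (simp only: points_in_cycles_eq_mult_cyc_count[OF \<sigma>] of_nat_mult power_mult_distrib)
  finally show ?thesis
    by (simp add: monomial_eval_def prod.distrib del: of_nat_Suc)
qed

lemma sum_sign_monomial_eval_eq_0:
  assumes "sum_list (cycle_lengths e) + 2 \<le> n"
  shows "(\<Sum>\<sigma> | \<sigma> permutes {..<n}. of_int (sign \<sigma>) * monomial_eval e (cyc_count n \<sigma>)) = 0"
proof -
  let ?K = "\<Prod>i<length e. of_nat (Suc i) ^ (e ! i) :: complex"
  have "?K * (\<Sum>\<sigma> | \<sigma> permutes {..<n}. of_int (sign \<sigma>) * monomial_eval e (cyc_count n \<sigma>)) =
        (\<Sum>\<sigma> | \<sigma> permutes {..<n}. of_int (sign \<sigma>) * of_bool (has_orbit_cards [] \<sigma>) *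
            (\<Prod>l\<leftarrow>cycle_lengths e. of_nat (points_in_cycles n \<sigma> l)))"
    by (simp add: sum_distrib_left prod_points_in_cycles_cycle_lengths has_orbit_cards_def mult_ac)
  also have "\<dots> = 0"
    using sum_sign_prod_points_in_cycles_eq_0[of "[]"] assms by simp
  finally show ?thesis
    by (simp del: of_nat_Suc)
qed

definition cpoly_weight :: "cpoly \<Rightarrow> nat" where
  "cpoly_weight p = (\<Sum>(c, e)\<leftarrow>p. sum_list (cycle_lengths e))"

lemma sum_sign_cpoly_eval_eq_0:
  assumes "cpoly_weight p + 2 \<le> n"
  shows "(\<Sum>\<sigma> | \<sigma> permutes {..<n}. of_int (sign \<sigma>) * cpoly_eval p (cyc_count n \<sigma>)) = 0"
  using assms
proof (induction p)
  case Nil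
  then show ?case
    by (simp add: cpoly_eval_def)
next
  case (Cons t p)
  obtain c e where t: "t = (c, e)"
    by fastforce
  have "(\<Sum>\<sigma> | \<sigma> permutes {..<n}. of_int (sign \<sigma>) * cpoly_eval (t # p) (cyc_count n \<sigma>)) =
        c * (\<Sum>\<sigma> | \<sigma> permutes {..<n}. of_int (sign \<sigma>) * monomial_eval e (cyc_count n \<sigma>)) +
        (\<Sum>\<sigma> | \<sigma> permutes {..<n}. of_int (sign \<sigma>) * cpoly_eval p (cyc_count n \<sigma>))"
    by (simp add: t cpoly_eval_Cons sum.distrib sum_distrib_left algebra_simps)
  also have "\<dots> = 0"
    using sum_sign_monomial_eval_eq_0[of e n] Cons by (simp add: t cpoly_weight_def)
  finally show ?case .
qed

section \<open>Traces of matrices with A * A = c A\<close>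

lemma index_mult_mat_vec_sum:
  assumes "A \<in> carrier_mat m n" "v \<in> carrier_vec n" "i < m"
  shows "(A *\<^sub>v v) $ i = (\<Sum>k<n. A $$ (i, k) * v $ k)"
  using assms by (simp add: scalar_prod_def lessThan_atLeast0)

lemma mat_trace_mult_comm:
  assumes A: "A \<in> carrier_mat m n" and B: "B \<in> carrier_mat n m"
  shows "mat_trace (A * B) = mat_trace (B * A)"
proof -
  have "mat_trace (A * B) = (\<Sum>i<m. \<Sum>k<n. A $$ (i, k) * B $$ (k, i))"
    unfolding mat_trace_def using A B
    by (intro sum.cong) (auto simp: scalar_prod_def lessThan_atLeast0)
  also have "\<dots> = (\<Sum>k<n. \<Sum>i<m. B $$ (k, i) * A $$ (i, k))"
    by (subst sum.swap) (simp add: mult.commute)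
  also have "\<dots> = mat_trace (B * A)"
    unfolding mat_trace_def using A B
    by (intro sum.cong) (auto simp: scalar_prod_def lessThan_atLeast0)
  finally show ?thesis .
qed

lemma mat_trace_eq_sum_eigenvalues:
  assumes A: "A \<in> carrier_mat d d" and es: "char_poly A = (\<Prod>a\<leftarrow>es. [:- a, 1:])"
  shows "mat_trace A = sum_list es"
proof -
  obtain B P Q where "schur_decomposition A es = (B, P, Q)"
    by (cases "schur_decomposition A es") auto
  with schur_decomposition[OF A es]
  have sim: "similar_mat_wit A B P Q" and diag: "diag_mat B = es"
    by auto
  note wit = similar_mat_witD2[OF A sim]
  have "mat_trace A = mat_trace ((P * B) * Q)"
    using wit by simp
  also have "\<dots> = mat_trace (Q * (P * B))"
    using wit by (intro mat_trace_mult_comm) auto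
  also have "Q * (P * B) = B"
    using wit by (simp add: assoc_mult_mat[symmetric, of Q d d P d B d])
  also have "mat_trace B = sum_list (diag_mat B)"
    by (simp add: mat_trace_def diag_mat_def interv_sum_list_conv_sum_set_nat atLeast0LessThan)
  finally show ?thesis
    using diag by simp
qed

lemma eigenvalue_eq_0_or_eq_if_square_eq_smult:
  fixes A :: "'a::field mat"
  assumes A: "A \<in> carrier_mat d d" and sq: "A * A = c \<cdot>\<^sub>m A" and "eigenvalue A a"
  shows "a = 0 \<or> a = c"
proof -
  obtain w where w: "w \<in> carrier_vec d" "w \<noteq> 0\<^sub>v d" "A *\<^sub>v w = a \<cdot>\<^sub>v w"
    using assms(3) A unfolding eigenvalue_def eigenvector_def by auto
  obtain i where i: "i < d" "w $ i \<noteq> 0"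
    using w(1,2) by (metis carrier_vecD eq_vecI index_zero_vec)
  have "(A * A *\<^sub>v w) $ i = a * a * w $ i"
    using A w i by (simp add: mult_mat_vec)
  moreover have "(A * A *\<^sub>v w) $ i = c * (A *\<^sub>v w) $ i"
    using A w(1) i unfolding sq
    by (simp add: scalar_prod_def sum_distrib_left mult.assoc)
  moreover have "(A *\<^sub>v w) $ i = a * w $ i"
    using w i by simp
  ultimately have "(a * a) * w $ i = (c * a) * w $ i"
    by (simp only: mult.assoc)
  then have "a * a = c * a"
    using i(2) mult_cancel_right by blast
  then show ?thesis
    using mult_cancel_right by blast
qed

lemma mat_trace_neq_0_if_square_eq_smult:
  fixes A :: "complex mat"
  assumes A: "A \<in> carrier_mat d d" and sq: "A * A = c \<cdot>\<^sub>m A" and "c \<noteq> 0" "eigenvalue A c"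
  shows "mat_trace A \<noteq> 0"
proof -
  obtain es where es: "char_poly A = (\<Prod>a\<leftarrow>es. [:- a, 1:])"
    using char_poly_factorized[OF A] by auto
  have eigenvalue_iff: "eigenvalue A a \<longleftrightarrow> a \<in> set es" for a
    unfolding eigenvalue_root_char_poly[OF A] es poly_prod_list by (induction es) auto
  have "\<forall>a\<in>set es. a = 0 \<or> a = c"
    using eigenvalue_iff eigenvalue_eq_0_or_eq_if_square_eq_smult[OF A sq] by blast
  then have "sum_list es = of_nat (count_list es c) * c"
    by (induction es) (auto simp: algebra_simps)
  moreover have "count_list es c \<noteq> 0"
    using eigenvalue_iff assms(4) by (simp add: count_list_0_iff)
  ultimately show ?thesis
    using mat_trace_eq_sum_eigenvalues[OF A es] \<open>c \<noteq> 0\<close> by simp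
qed

section \<open>The antisymmetrizer of a representation\<close>

definition antisymmetrizer :: "nat \<Rightarrow> nat \<Rightarrow> ((nat \<Rightarrow> nat) \<Rightarrow> complex mat) \<Rightarrow> complex mat" where
  "antisymmetrizer n d \<rho> =
     mat d d (\<lambda>(i, j). \<Sum>\<sigma> | \<sigma> permutes {..<n}. of_int (sign \<sigma>) * \<rho> \<sigma> $$ (i, j))"

lemma antisymmetrizer_carrier: "antisymmetrizer n d \<rho> \<in> carrier_mat d d"
  by (simp add: antisymmetrizer_def)

lemma index_antisymmetrizer:
  "i < d \<Longrightarrow> j < d \<Longrightarrow>
    antisymmetrizer n d \<rho> $$ (i, j) = (\<Sum>\<sigma> | \<sigma> permutes {..<n}. of_int (sign \<sigma>) * \<rho> \<sigma> $$ (i, j))"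
  by (simp add: antisymmetrizer_def)

lemma mat_trace_antisymmetrizer:
  assumes rep: "is_rep n d \<rho>"
  shows "mat_trace (antisymmetrizer n d \<rho>) =
    (\<Sum>\<sigma> | \<sigma> permutes {..<n}. of_int (sign \<sigma>) * mat_trace (\<rho> \<sigma>))"
proof -
  have "mat_trace (antisymmetrizer n d \<rho>) =
      (\<Sum>i<d. \<Sum>\<sigma> | \<sigma> permutes {..<n}. of_int (sign \<sigma>) * \<rho> \<sigma> $$ (i, i))"
    unfolding mat_trace_def using antisymmetrizer_carrier[of n d \<rho>]
    by (intro sum.cong) (auto simp: index_antisymmetrizer)
  also have "\<dots> = (\<Sum>\<sigma> | \<sigma> permutes {..<n}. \<Sum>i<d. of_int (sign \<sigma>) * \<rho> \<sigma> $$ (i, i))"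
    by (rule sum.swap)
  also have "\<dots> = (\<Sum>\<sigma> | \<sigma> permutes {..<n}. of_int (sign \<sigma>) * mat_trace (\<rho> \<sigma>))"
    using rep by (intro sum.cong) (auto simp: is_rep_def mat_trace_def sum_distrib_left)
  finally show ?thesis .
qed

lemma antisymmetrizer_square:
  assumes rep: "is_rep n d \<rho>"
  shows "antisymmetrizer n d \<rho> * antisymmetrizer n d \<rho> = of_nat (fact n) \<cdot>\<^sub>m antisymmetrizer n d \<rho>"
proof (rule eq_matI)
  let ?S = "{\<sigma>. \<sigma> permutes {..<n}}"
  let ?A = "antisymmetrizer n d \<rho>"
  let ?f = "\<lambda>\<sigma> i j. of_int (sign \<sigma>) * \<rho> \<sigma> $$ (i, j)"
  have A: "?A \<in> carrier_mat d d"
    by (rule antisymmetrizer_carrier)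
  fix i j assume "i < dim_row (of_nat (fact n) \<cdot>\<^sub>m ?A)" "j < dim_col (of_nat (fact n) \<cdot>\<^sub>m ?A)"
  then have ij: "i < d" "j < d"
    by (simp_all add: antisymmetrizer_def)
  have compose: "(\<Sum>k<d. ?f \<sigma> i k * ?f \<tau> k j) = ?f (\<sigma> \<circ> \<tau>) i j" if "\<sigma> \<in> ?S" "\<tau> \<in> ?S" for \<sigma> \<tau>
  proof -
    have "\<rho> \<sigma> \<in> carrier_mat d d" "\<rho> \<tau> \<in> carrier_mat d d" "\<rho> (\<sigma> \<circ> \<tau>) = \<rho> \<sigma> * \<rho> \<tau>"
      using rep that by (auto simp: is_rep_def)
    moreover have "sign (\<sigma> \<circ> \<tau>) = sign \<sigma> * sign \<tau>"
      using that permutes_imp_permutation[OF finite_lessThan] by (simp add: sign_compose)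
    ultimately show ?thesis
      using ij by (simp add: scalar_prod_def lessThan_atLeast0 sum_distrib_left mult_ac)
  qed
  have "(?A * ?A) $$ (i, j) = (\<Sum>k<d. (\<Sum>\<sigma>\<in>?S. ?f \<sigma> i k) * (\<Sum>\<tau>\<in>?S. ?f \<tau> k j))"
    using A ij by (simp add: scalar_prod_def lessThan_atLeast0 index_antisymmetrizer)
  also have "\<dots> = (\<Sum>\<sigma>\<in>?S. \<Sum>\<tau>\<in>?S. \<Sum>k<d. ?f \<sigma> i k * ?f \<tau> k j)"
    by (simp add: sum_product sum.swap[of _ "{..<d}"])
  also have "\<dots> = (\<Sum>\<sigma>\<in>?S. \<Sum>\<tau>\<in>?S. ?f (\<sigma> \<circ> \<tau>) i j)"
    by (intro sum.cong refl) (simp add: compose)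
  also have "\<dots> = (\<Sum>\<sigma>\<in>?S. \<Sum>\<tau>\<in>?S. ?f \<tau> i j)"
    by (rule sum.cong[OF refl])
      (use setum_permutations_compose_left[where f = "\<lambda>\<tau>. ?f \<tau> i j"] in simp)
  also have "\<dots> = (of_nat (fact n) \<cdot>\<^sub>m ?A) $$ (i, j)"
    using A ij by (simp add: index_antisymmetrizer card_permutations)
  finally show "(?A * ?A) $$ (i, j) = (of_nat (fact n) \<cdot>\<^sub>m ?A) $$ (i, j)" .
qed (simp_all add: antisymmetrizer_def)

lemma antisymmetrizer_mult_vec_sign:
  assumes rep: "is_rep n d \<rho>" and v: "v \<in> carrier_vec d"
    and sign_v: "\<And>\<sigma>. \<sigma> permutes {..<n} \<Longrightarrow> \<rho> \<sigma> *\<^sub>v v = of_int (sign \<sigma>) \<cdot>\<^sub>v v"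
  shows "antisymmetrizer n d \<rho> *\<^sub>v v = of_nat (fact n) \<cdot>\<^sub>v v"
proof (rule eq_vecI)
  let ?S = "{\<sigma>. \<sigma> permutes {..<n}}"
  fix i assume "i < dim_vec (of_nat (fact n) \<cdot>\<^sub>v v)"
  then have i: "i < d"
    using v by simp
  have sign_v_i: "(\<Sum>j<d. \<rho> \<sigma> $$ (i, j) * v $ j) = of_int (sign \<sigma>) * v $ i" if "\<sigma> \<in> ?S" for \<sigma>
  proof -
    have "\<rho> \<sigma> \<in> carrier_mat d d"
      using rep that by (simp add: is_rep_def)
    then have "(\<rho> \<sigma> *\<^sub>v v) $ i = (\<Sum>j<d. \<rho> \<sigma> $$ (i, j) * v $ j)"
      using index_mult_mat_vec_sum v i by blast
    then show ?thesis
      using sign_v[of \<sigma>] that i v by simp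
  qed
  have "(antisymmetrizer n d \<rho> *\<^sub>v v) $ i =
      (\<Sum>j<d. \<Sum>\<sigma>\<in>?S. of_int (sign \<sigma>) * (\<rho> \<sigma> $$ (i, j) * v $ j))"
    using i v by (auto simp: index_mult_mat_vec_sum[OF antisymmetrizer_carrier]
        index_antisymmetrizer sum_distrib_right mult.assoc intro!: sum.cong)
  also have "\<dots> = (\<Sum>\<sigma>\<in>?S. of_int (sign \<sigma>) * (\<Sum>j<d. \<rho> \<sigma> $$ (i, j) * v $ j))"
    by (simp add: sum.swap[of _ "{..<d}"] sum_distrib_left)
  also have "\<dots> = (\<Sum>\<sigma>\<in>?S. v $ i)"
    by (intro sum.cong refl) (simp add: sign_v_i mult.assoc[symmetric] flip: of_int_mult)
  also have "\<dots> = (of_nat (fact n) \<cdot>\<^sub>v v) $ i"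
    using i v by (simp add: card_permutations)
  finally show "(antisymmetrizer n d \<rho> *\<^sub>v v) $ i = (of_nat (fact n) \<cdot>\<^sub>v v) $ i" .
qed (use v in \<open>simp add: antisymmetrizer_def\<close>)

lemma not_sign_occurs_if_character_eq_cpoly_eval:
  assumes rep: "is_rep n d \<rho>"
    and character: "\<And>\<sigma>. \<sigma> permutes {..<n} \<Longrightarrow> mat_trace (\<rho> \<sigma>) = cpoly_eval p (cyc_count n \<sigma>)"
    and n: "cpoly_weight p + 2 \<le> n"
  shows "\<not> sign_occurs n d \<rho>"
proof
  assume "sign_occurs n d \<rho>"
  then obtain v where v: "v \<in> carrier_vec d" "v \<noteq> 0\<^sub>v d"
    and sign_v: "\<And>\<sigma>. \<sigma> permutes {..<n} \<Longrightarrow> \<rho> \<sigma> *\<^sub>v v = of_int (sign \<sigma>) \<cdot>\<^sub>v v"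
    unfolding sign_occurs_def by blast
  have "eigenvalue (antisymmetrizer n d \<rho>) (of_nat (fact n))"
    using antisymmetrizer_mult_vec_sign[OF rep v(1) sign_v] v antisymmetrizer_carrier[of n d \<rho>]
    unfolding eigenvalue_def eigenvector_def by auto
  then have "mat_trace (antisymmetrizer n d \<rho>) \<noteq> 0"
    by (intro mat_trace_neq_0_if_square_eq_smult[OF antisymmetrizer_carrier antisymmetrizer_square[OF rep]])
      simp_all
  moreover have "mat_trace (antisymmetrizer n d \<rho>) =
      (\<Sum>\<sigma> | \<sigma> permutes {..<n}. of_int (sign \<sigma>) * cpoly_eval p (cyc_count n \<sigma>))"
    unfolding mat_trace_antisymmetrizer[OF rep] using character by (intro sum.cong) auto
  ultimately show False
    using sum_sign_cpoly_eval_eq_0[OF n] by simp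
qed

section \<open>Weyl modules\<close>

lemma young_sym_eq_0_if_length_neq:
  assumes "T \<in> tensor_space n k" "length w \<noteq> k"
  shows "young_sym lam T w = 0"
proof -
  have "T (map (\<lambda>j. w ! \<pi> j) [0..<length w]) = 0" for \<pi>
    using assms by (auto simp: tensor_space_def)
  then show ?thesis
    by (simp add: young_sym_def pos_act_def)
qed

lemma sign_tensor_eq_0_on_short_words:
  assumes sign_v: "\<And>\<sigma>. \<sigma> permutes {..<n} \<Longrightarrow> letter_act \<sigma> v = (\<lambda>w. of_int (sign \<sigma>) * v w)"
    and "length w + 2 \<le> n"
  shows "v w = 0"
proof -
  have "card (set w) + 2 \<le> card {..<n}"
    using card_length[of w] assms(2) by simp
  then obtain a b where ab: "a \<in> {..<n} - set w" "b \<in> {..<n} - set w" "a \<noteq> b"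
    by (rule obtain_two_outside[OF finite_lessThan finite_set])
  then have "transpose a b permutes {..<n}"
    by (intro permutes_swap_id) auto
  then have "letter_act (transpose a b) v w = - v w"
    using sign_v ab(3) by (simp add: sign_swap_id)
  moreover have "map (transpose a b) w = w"
    using ab by (intro map_idI) (metis Diff_iff transpose_apply_other)
  then have "letter_act (transpose a b) v w = v w"
    by (simp add: letter_act_def)
  ultimately show ?thesis
    by simp
qed

lemma not_sign_occurs_in_weyl:
  assumes "n > sum_list lam + 1"
  shows "\<not> sign_occurs_in_weyl lam n"
proof
  assume "sign_occurs_in_weyl lam n"
  then obtain T where T: "T \<in> tensor_space n (sum_list lam)"
    and nonzero: "young_sym lam T \<noteq> (\<lambda>_. 0)"
    and sign_v: "\<And>\<sigma>. \<sigma> permutes {..<n} \<Longrightarrow>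
      letter_act \<sigma> (young_sym lam T) = (\<lambda>w. of_int (sign \<sigma>) * young_sym lam T w)"
    unfolding sign_occurs_in_weyl_def weyl_module_def by blast
  have "young_sym lam T w = 0" for w
    using young_sym_eq_0_if_length_neq[OF T] sign_tensor_eq_0_on_short_words[OF sign_v] assms
    by (cases "length w = sum_list lam") auto
  then show False
    using nonzero by auto
qed

theorem corollary2p6:
  shows "(\<forall>(d :: nat \<Rightarrow> nat) (\<rho> :: nat \<Rightarrow> (nat \<Rightarrow> nat) \<Rightarrow> complex mat).
            (\<forall>n\<ge>1. is_rep n (d n) (\<rho> n)) \<and> eventually_polynomial d \<rho> \<longrightarrow>
            (\<exists>N. \<forall>n\<ge>N. \<not> sign_occurs n (d n) (\<rho> n)))
       \<and> (\<forall>lam n. is_partition lam \<and> n > sum_list lam + 1 \<longrightarrow> \<not> sign_occurs_in_weyl lam n)"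
proof (intro conjI allI impI)
  fix d :: "nat \<Rightarrow> nat" and \<rho> :: "nat \<Rightarrow> (nat \<Rightarrow> nat) \<Rightarrow> complex mat"
  assume rep: "(\<forall>n\<ge>1. is_rep n (d n) (\<rho> n)) \<and> eventually_polynomial d \<rho>"
  then obtain p N where character: "\<forall>n\<ge>N. \<forall>\<sigma>. \<sigma> permutes {..<n} \<longrightarrow>
      mat_trace (\<rho> n \<sigma>) = cpoly_eval p (cyc_count n \<sigma>)"
    unfolding eventually_polynomial_def by blast
  have "\<not> sign_occurs n (d n) (\<rho> n)" if "max N (cpoly_weight p + 2) \<le> n" for n
    using rep character that by (intro not_sign_occurs_if_character_eq_cpoly_eval) auto
  then show "\<exists>N. \<forall>n\<ge>N. \<not> sign_occurs n (d n) (\<rho> n)"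
    by blast
next
  fix lam :: "nat list" and n :: nat
  assume "is_partition lam \<and> n > sum_list lam + 1"
  then show "\<not> sign_occurs_in_weyl lam n"
    using not_sign_occurs_in_weyl by blast
qed

end
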